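(* Assume (A), (R), (S), let $c^{\mathrm{in}}\in\ell^1_1$, and for $N\in\mathbb N$ let $c^N$ be the unique nonnegative $C^1$ solution of the truncated system (T$_N$) with initial data $c^N_k(0)=c^{\mathrm{in}}_k$ for $k\le N$. Then for every $T>0$ and $k\in\mathbb N$ there is a constant $\mathscr C$, depending on $T$ and $k$ (and the data) but not on $N$, such that $$\Bigl\|\frac{d}{dt}c^N_k\Bigr\|_{L^1(0,T)}\le\mathscr C\quad\text{for all }N\ge k.$$
   Context: Standing assumptions on the coefficients ($\mathbb N=\{1,2,\dots\}$): (A) $a_{k,\ell}=a_{\ell,k}$ and $0\le a_{k,\ell}\le A_*(k^\alpha\ell^\beta+k^\beta\ell^\alpha)$ for all $k,\ell\in\mathbb N$, with constants $A_*>0$, $\alpha,\beta\in[0,1]$, $\alpha\le\beta$; (R) $r_k\ge R_*k^\gamma$ for all $k\in\mathbb N$, with $R_*>0$ and $\gamma>\max\{0,\alpha+\beta-1\}$; (S) $s_k\ge 0$ for all $k$, and for every $\mu\ge0$ there is $\mathfrak s_\mu>0$ with $\sum_{k\ge1}k^\mu s_k\le\mathfrak s_\mu$. $\ell^1_1$ is the set of sequences $(c_k)_{k\in\mathbb N}$ with $c_k\ge0$ and $\sum_k kc_k<\infty$. Truncated system (T$_N$): $\frac{d}{dt}c_k^N=\frac12\sum_{\ell=1}^{k-1}a_{k-\ell,\ell}c^N_{k-\ell}c^N_\ell-c^N_k\sum_{\ell=1}^{N-k}a_{k,\ell}c^N_\ell+s_k-r_kc^N_k$ for $k\le N$, and $c^N_k\equiv0$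 for $k>N$. *)

theory Defs
  imports "HOL-Analysis.Analysis"
begin

end

theory Submission
  imports Defs
begin

text \<open>The loss terms of the truncated system are nonnegative, so the derivative of c_k^N is bounded
  above by the gain term plus s_k, which involves only the sizes l < k. By strong induction on k this
  bounds c_k^N on [0,T] uniformly in N, hence gives a uniform upper bound M on its derivative.
  A one-sided bound suffices for an L^1 bound: |x| <= 2M - x whenever x <= M and 0 <= M, and the
  integral of the derivative is c_k^N(T) - cin_k >= - cin_k.
  Only the nonnegativity of the coefficients and of the solution is used.\<close>

lemma has_integral_derivative_from_zero:
  fixes f f' :: "real \<Rightarrow> real"
  assumes derivative: "\<And>t. 0 \<le> t \<Longrightarrow> (f has_real_derivative f' t) (at t within {0..})"
    and "0 \<le> b"
  shows "(f' has_integral (f b - f 0)) {0..b}"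
proof (rule fundamental_theorem_of_calculus[OF \<open>0 \<le> b\<close>])
  fix x assume x: "x \<in> {0..b}"
  have "(f has_real_derivative f' x) (at x within {0..b})"
    by (rule DERIV_subset[OF derivative]) (use x in auto)
  then show "(f has_vector_derivative f' x) (at x within {0..b})"
    by (simp add: has_real_derivative_iff_has_vector_derivative)
qed

lemma increment_le_of_derivative_le:
  fixes f f' :: "real \<Rightarrow> real"
  assumes derivative: "\<And>t. 0 \<le> t \<Longrightarrow> (f has_real_derivative f' t) (at t within {0..})"
    and upper: "\<And>x. x \<in> {0..t} \<Longrightarrow> f' x \<le> M" and "0 \<le> t"
  shows "f t - f 0 \<le> t * M"
proof -
  have "((\<lambda>_. M) has_integral (t * M)) {0..t}"
    using has_integral_const_real[of M 0 t] \<open>0 \<le> t\<close> by simp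
  with has_integral_derivative_from_zero[OF derivative \<open>0 \<le> t\<close>] show ?thesis
    by (rule has_integral_le) (use upper in auto)
qed

lemma integral_abs_derivative_le:
  fixes f f' :: "real \<Rightarrow> real"
  assumes derivative: "\<And>t. 0 \<le> t \<Longrightarrow> (f has_real_derivative f' t) (at t within {0..})"
    and cont: "continuous_on {0..T} f'"
    and upper: "\<And>t. t \<in> {0..T} \<Longrightarrow> f' t \<le> M"
    and "0 \<le> M" "0 \<le> T" "0 \<le> f T"
  shows "integral {0..T} (\<lambda>t. \<bar>f' t\<bar>) \<le> 2 * T * M + f 0"
proof -
  have "continuous_on {0..T} (\<lambda>t. \<bar>f' t\<bar>)"
    using cont by (intro continuous_intros)
  then have abs_int: "((\<lambda>t. \<bar>f' t\<bar>) has_integral integral {0..T} (\<lambda>t. \<bar>f' t\<bar>)) {0..T}"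
    by (intro integrable_integral integrable_continuous_interval)
  have "((\<lambda>_. 2 * M) has_integral (T * (2 * M))) {0..T}"
    using has_integral_const_real[of "2 * M" 0 T] \<open>0 \<le> T\<close> by simp
  then have majorant: "((\<lambda>t. 2 * M - f' t) has_integral (T * (2 * M) - (f T - f 0))) {0..T}"
    using has_integral_derivative_from_zero[OF derivative \<open>0 \<le> T\<close>] by (rule has_integral_diff)
  have "integral {0..T} (\<lambda>t. \<bar>f' t\<bar>) \<le> T * (2 * M) - (f T - f 0)"
    using abs_int majorant by (rule has_integral_le) (use upper \<open>0 \<le> M\<close> in force)
  with \<open>0 \<le> f T\<close> show ?thesis by simp
qed

locale truncated_coagulation =
  fixes a :: "nat \<Rightarrow> nat \<Rightarrow> real" and r s cin :: "nat \<Rightarrow> real"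
    and c dc :: "nat \<Rightarrow> nat \<Rightarrow> real \<Rightarrow> real"
  assumes coeff_nonneg: "\<And>k l. 1 \<le> k \<Longrightarrow> 1 \<le> l \<Longrightarrow> 0 \<le> a k l"
    and rate_nonneg: "\<And>k. 1 \<le> k \<Longrightarrow> 0 \<le> r k"
    and sol_nonneg: "\<And>N k t. N \<ge> 1 \<Longrightarrow> k \<ge> 1 \<Longrightarrow> t \<ge> 0 \<Longrightarrow> c N k t \<ge> 0"
    and sol_init: "\<And>N k. N \<ge> 1 \<Longrightarrow> 1 \<le> k \<Longrightarrow> k \<le> N \<Longrightarrow> c N k 0 = cin k"
    and sol_deriv: "\<And>N k t. N \<ge> 1 \<Longrightarrow> 1 \<le> k \<Longrightarrow> k \<le> N \<Longrightarrow> t \<ge> 0 \<Longrightarrow>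
        (c N k has_real_derivative dc N k t) (at t within {0..})"
    and sol_C1: "\<And>N k. N \<ge> 1 \<Longrightarrow> 1 \<le> k \<Longrightarrow> k \<le> N \<Longrightarrow> continuous_on {0..} (dc N k)"
    and sol_eq: "\<And>N k t. N \<ge> 1 \<Longrightarrow> 1 \<le> k \<Longrightarrow> k \<le> N \<Longrightarrow> t \<ge> 0 \<Longrightarrow>
        dc N k t = 1/2 * (\<Sum>l=1..k-1. a (k-l) l * c N (k-l) t * c N l t)
                   - c N k t * (\<Sum>l=1..N-k. a k l * c N l t) + s k - r k * c N k t"
begin

definition gain :: "nat \<Rightarrow> nat \<Rightarrow> real \<Rightarrow> real" where
  "gain N k t = 1/2 * (\<Sum>l=1..k-1. a (k-l) l * c N (k-l) t * c N l t)"

lemma gain_nonneg: "N \<ge> 1 \<Longrightarrow> t \<ge> 0 \<Longrightarrow> 0 \<le> gain N k t"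
  unfolding gain_def
  by (intro mult_nonneg_nonneg sum_nonneg) (auto intro: coeff_nonneg sol_nonneg)

lemma derivative_le_gain:
  assumes "1 \<le> k" "k \<le> N" "0 \<le> t"
  shows "dc N k t \<le> gain N k t + s k"
proof -
  have "0 \<le> c N k t * (\<Sum>l=1..N-k. a k l * c N l t)"
    using assms by (intro mult_nonneg_nonneg sum_nonneg) (auto intro: coeff_nonneg sol_nonneg)
  moreover have "0 \<le> r k * c N k t"
    using assms by (intro mult_nonneg_nonneg rate_nonneg sol_nonneg) auto
  ultimately show ?thesis
    using sol_eq[of N k t] assms unfolding gain_def by simp
qed

lemma gain_bounded_if_smaller_sizes_bounded:
  assumes smaller: "\<And>l. 1 \<le> l \<Longrightarrow> l < k \<Longrightarrow> \<exists>B. \<forall>N\<ge>l. \<forall>t\<in>{0..T}. c N l t \<le> B"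
  shows "\<exists>G. \<forall>N\<ge>k. \<forall>t\<in>{0..T}. gain N k t \<le> G"
proof -
  obtain B where B: "\<And>l N t. 1 \<le> l \<Longrightarrow> l < k \<Longrightarrow> N \<ge> l \<Longrightarrow> t \<in> {0..T} \<Longrightarrow> c N l t \<le> B l"
    using smaller by metis
  have "gain N k t \<le> 1/2 * (\<Sum>l=1..k-1. a (k-l) l * B (k-l) * B l)"
    if N: "N \<ge> k" and t: "t \<in> {0..T}" for N t
    unfolding gain_def
  proof (intro mult_left_mono sum_mono)
    fix l assume l: "l \<in> {1..k-1}"
    have c1: "0 \<le> c N (k-l) t" "c N (k-l) t \<le> B (k-l)"
      and c2: "0 \<le> c N l t" "c N l t \<le> B l"
      using sol_nonneg[of N "k-l" t] sol_nonneg[of N l t] B[of "k-l" N t] B[of l N t] l N t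
      by auto
    have a0: "0 \<le> a (k-l) l"
      using coeff_nonneg[of "k-l" l] l by auto
    show "a (k-l) l * c N (k-l) t * c N l t \<le> a (k-l) l * B (k-l) * B l"
      using a0 c1 c2 by (intro mult_mono mult_left_mono) auto
  qed simp
  then show ?thesis by blast
qed

lemma solution_uniformly_bounded:
  "1 \<le> k \<Longrightarrow> \<exists>B. \<forall>N\<ge>k. \<forall>t\<in>{0..T}. c N k t \<le> B"
proof (induction k rule: less_induct)
  case (less k)
  have "\<exists>G. \<forall>N\<ge>k. \<forall>t\<in>{0..T}. gain N k t \<le> G"
    by (rule gain_bounded_if_smaller_sizes_bounded, rule less.IH) auto
  then obtain G where G: "\<And>N t. N \<ge> k \<Longrightarrow> t \<in> {0..T} \<Longrightarrow> gain N k t \<le> G"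
    by blast
  have "c N k t \<le> cin k + T * max 0 (G + s k)" if N: "N \<ge> k" and t: "t \<in> {0..T}" for N t
  proof -
    have "c N k t - c N k 0 \<le> t * max 0 (G + s k)"
    proof (rule increment_le_of_derivative_le)
      show "\<And>x. 0 \<le> x \<Longrightarrow> (c N k has_real_derivative dc N k x) (at x within {0..})"
        using sol_deriv N less.prems by auto
      fix x assume "x \<in> {0..t}"
      with derivative_le_gain[of k N x] G[of N x] N t less.prems
      show "dc N k x \<le> max 0 (G + s k)" by auto
    qed (use t in auto)
    also have "\<dots> \<le> T * max 0 (G + s k)"
      using t by (intro mult_right_mono) auto
    finally show ?thesis
      using sol_init[of N k] N less.prems by simp
  qed
  then show ?case by blast
qed

lemma derivative_L1_bounded:
  assumes "0 < T" "1 \<le> k"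
  shows "\<exists>C. \<forall>N\<ge>k. integral {0..T} (\<lambda>t. \<bar>dc N k t\<bar>) \<le> C"
proof -
  have "\<exists>G. \<forall>N\<ge>k. \<forall>t\<in>{0..T}. gain N k t \<le> G"
    by (intro gain_bounded_if_smaller_sizes_bounded solution_uniformly_bounded) auto
  then obtain G where G: "\<And>N t. N \<ge> k \<Longrightarrow> t \<in> {0..T} \<Longrightarrow> gain N k t \<le> G"
    by blast
  have "integral {0..T} (\<lambda>t. \<bar>dc N k t\<bar>) \<le> 2 * T * max 0 (G + s k) + cin k"
    if N: "N \<ge> k" for N
  proof -
    have N1: "N \<ge> 1" using N \<open>1 \<le> k\<close> by simp
    have "integral {0..T} (\<lambda>t. \<bar>dc N k t\<bar>) \<le> 2 * T * max 0 (G + s k) + c N k 0"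
    proof (rule integral_abs_derivative_le)
      show "continuous_on {0..T} (dc N k)"
        by (rule continuous_on_subset[OF sol_C1[OF N1 \<open>1 \<le> k\<close> N]]) auto
      show "dc N k t \<le> max 0 (G + s k)" if "t \<in> {0..T}" for t
        using derivative_le_gain[OF \<open>1 \<le> k\<close> N, of t] G[OF N that] that by auto
    qed (use sol_deriv[OF N1 \<open>1 \<le> k\<close> N] sol_nonneg[OF N1 \<open>1 \<le> k\<close>] \<open>0 < T\<close> in auto)
    then show ?thesis
      using sol_init[OF N1 \<open>1 \<le> k\<close> N] by simp
  qed
  then show ?thesis by blast
qed

end

theorem mainTheorem10:
  fixes a :: "nat \<Rightarrow> nat \<Rightarrow> real" and r s cin :: "nat \<Rightarrow> real"
    and Astar Rstar \<alpha> \<beta> \<gamma> :: real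
    and c dc :: "nat \<Rightarrow> nat \<Rightarrow> real \<Rightarrow> real"
  assumes A_sym: "\<And>k l. k \<ge> 1 \<Longrightarrow> l \<ge> 1 \<Longrightarrow> a k l = a l k"
    and A_bound: "\<And>k l. k \<ge> 1 \<Longrightarrow> l \<ge> 1 \<Longrightarrow>
        0 \<le> a k l \<and> a k l \<le> Astar * (real k powr \<alpha> * real l powr \<beta> + real k powr \<beta> * real l powr \<alpha>)"
    and A_const: "Astar > 0" "0 \<le> \<alpha>" "\<alpha> \<le> \<beta>" "\<beta> \<le> 1"
    and R_bound: "\<And>k. k \<ge> 1 \<Longrightarrow> r k \<ge> Rstar * real k powr \<gamma>"
    and R_const: "Rstar > 0" "\<gamma> > max 0 (\<alpha> + \<beta> - 1)"
    and S_nonneg: "\<And>k. k \<ge> 1 \<Longrightarrow> s k \<ge> 0"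
    and S_moments: "\<And>\<mu>::real. \<mu> \<ge> 0 \<Longrightarrow>
        \<exists>S>0. \<forall>n. (\<Sum>k=1..n. real k powr \<mu> * s k) \<le> S"
    and cin_nonneg: "\<And>k. k \<ge> 1 \<Longrightarrow> cin k \<ge> 0"
    and cin_l11: "summable (\<lambda>k. real k * cin k)"
    and sol_nonneg: "\<And>N k t. N \<ge> 1 \<Longrightarrow> k \<ge> 1 \<Longrightarrow> t \<ge> 0 \<Longrightarrow> c N k t \<ge> 0"
    and sol_zero: "\<And>N k t. N \<ge> 1 \<Longrightarrow> k > N \<Longrightarrow> t \<ge> 0 \<Longrightarrow> c N k t = 0"
    and sol_init: "\<And>N k. N \<ge> 1 \<Longrightarrow> 1 \<le> k \<Longrightarrow> k \<le> N \<Longrightarrow> c N k 0 = cin k"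
    and sol_deriv: "\<And>N k t. N \<ge> 1 \<Longrightarrow> 1 \<le> k \<Longrightarrow> k \<le> N \<Longrightarrow> t \<ge> 0 \<Longrightarrow>
        (c N k has_real_derivative dc N k t) (at t within {0..})"
    and sol_C1: "\<And>N k. N \<ge> 1 \<Longrightarrow> 1 \<le> k \<Longrightarrow> k \<le> N \<Longrightarrow> continuous_on {0..} (dc N k)"
    and sol_eq: "\<And>N k t. N \<ge> 1 \<Longrightarrow> 1 \<le> k \<Longrightarrow> k \<le> N \<Longrightarrow> t \<ge> 0 \<Longrightarrow>
        dc N k t = 1/2 * (\<Sum>l=1..k-1. a (k-l) l * c N (k-l) t * c N l t)
                   - c N k t * (\<Sum>l=1..N-k. a k l * c N l t) + s k - r k * c N k t"
  shows "\<forall>T>0. \<forall>k\<ge>1. \<exists>C. \<forall>N\<ge>k. integral {0..T} (\<lambda>t. \<bar>dc N k t\<bar>) \<le> C"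
proof -
  have "0 \<le> r k" if "1 \<le> k" for k
    using R_bound[OF that] R_const(1) by (smt (verit) powr_ge_zero zero_le_mult_iff)
  then interpret truncated_coagulation a r s cin c dc
    using A_bound sol_nonneg sol_init sol_deriv sol_C1 sol_eq by unfold_locales auto
  show ?thesis
    using derivative_L1_bounded by blast
qed

end
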